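(* Assume $C^\top C\succ0$. Let $(\gamma_n)_{n\in\mathbb{N}}$ be a sequence of positive numbers with $\gamma_n\to0$, and for $\widetilde W\in\mathbb{R}^{p^2}$ define $$F^{\gamma_n}(\widetilde W)=f(\widetilde W)+\gamma_n\,g\big((V_2\otimes V_1)\widetilde W\big)+\delta_{\{\widehat{\mathcal{A}}\widetilde W=0\}}(\widetilde W),\qquad F(\widetilde W)=f(\widetilde W)+\delta_{\{\widehat{\mathcal{A}}\widetilde W=0\}}(\widetilde W).$$ Then $\inf F^{\gamma_n}\to\inf F$.
   Context: Let $n,m,M\ge1$, $p=m+n$. For $i=1,\dots,M$ let $A_i\in\mathbb{R}^{n\times n}$, $B_{2,i}\in\mathbb{R}^{n\times m}$, $F_i=\begin{bmatrix}A_i&B_{2,i}\\0&0\end{bmatrix}$. Let $B_1\in\mathbb{R}^{n\times l}$, $C\in\mathbb{R}^{q\times n}$, $D\in\mathbb{R}^{q\times m}$ with $C^\top D=0$, $D^\top D\succ0$, $B_1B_1^\top\succ0$; $Q=\begin{bmatrix}B_1B_1^\top&0\\0&0\end{bmatrix}$, $R=\begin{bmatrix}C^\top C&0\\0&D^\top D\end{bmatrix}$, $V_1=[0,\ I_m]\in\mathbb{R}^{m\times p}$, $V_2=[I_n,\ 0]\in\mathbb{R}^{n\times p}$, $\Psi_i(W)=-V_2(F_iW+WF_i^\top+Q)V_2^\top$. $\mathrm{vec}$ is column-stacking, so $(V_2\otimes V_1)\mathrm{vec}(W)=\mathrm{vec}(V_1WV_2^\top)$. $\Gamma^k_+=\{\mathrm{vec}(X):X\in\mathbb{S}^k_+\}$,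 $\delta_S$ the indicator function of $S$. For $\widetilde W=\mathrm{vec}(W)$: $f(\widetilde W)=\langle\mathrm{vec}(R),\widetilde W\rangle+\delta_{\Gamma^p_+}(\widetilde W)+\sum_{i=1}^M\delta_{\Gamma^n_+}(\mathrm{vec}(\Psi_i(W)))$. $\widehat{\mathcal{A}}$ is the linear map with $\widehat{\mathcal{A}}\,\mathrm{vec}(W)=(W_{ij})_{1\le i<j\le n}$. $g(P)=\sum_{i,j}w_{ij}|P_{ij}|$ for $P\in\mathbb{R}^{mn}$ viewed as an $m\times n$ matrix, with fixed weights $w_{ij}>0$. *)

theory Defs
  imports Complex_Main "HOL-Library.Extended_Real" "Jordan_Normal_Form.Matrix"
begin

definition psd_mat :: "nat \<Rightarrow> real mat \<Rightarrow> bool" where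
  "psd_mat k X \<longleftrightarrow> X \<in> carrier_mat k k \<and> transpose_mat X = X \<and>
     (\<forall>v \<in> carrier_vec k. 0 \<le> v \<bullet> (X *\<^sub>v v))"

definition pd_mat :: "nat \<Rightarrow> real mat \<Rightarrow> bool" where
  "pd_mat k X \<longleftrightarrow> X \<in> carrier_mat k k \<and> transpose_mat X = X \<and>
     (\<forall>v \<in> carrier_vec k. v \<noteq> 0\<^sub>v k \<longrightarrow> 0 < v \<bullet> (X *\<^sub>v v))"

definition ind :: "bool \<Rightarrow> ereal" where
  "ind b = (if b then 0 else \<infinity>)"

definition Fmat :: "nat \<Rightarrow> nat \<Rightarrow> real mat \<Rightarrow> real mat \<Rightarrow> real mat" where
  "Fmat n m A B2 = four_block_mat A B2 (0\<^sub>m m n) (0\<^sub>m m m)"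

definition Qmat :: "nat \<Rightarrow> nat \<Rightarrow> real mat \<Rightarrow> real mat" where
  "Qmat n m B1 = four_block_mat (B1 * transpose_mat B1) (0\<^sub>m n m) (0\<^sub>m m n) (0\<^sub>m m m)"

definition Rmat :: "nat \<Rightarrow> nat \<Rightarrow> real mat \<Rightarrow> real mat \<Rightarrow> real mat" where
  "Rmat n m C D = four_block_mat (transpose_mat C * C) (0\<^sub>m n m) (0\<^sub>m m n) (transpose_mat D * D)"

text \<open>V_1 = [0, I_m] (m x p), V_2 = [I_n, 0] (n x p), p = m + n.\<close>
definition V1 :: "nat \<Rightarrow> nat \<Rightarrow> real mat" where
  "V1 n m = mat m (n + m) (\<lambda>(i, j). if j = n + i then 1 else 0)"

definition V2 :: "nat \<Rightarrow> nat \<Rightarrow> real mat" where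
  "V2 n m = mat n (n + m) (\<lambda>(i, j). if j = i then 1 else 0)"

definition Psi :: "nat \<Rightarrow> nat \<Rightarrow> real mat \<Rightarrow> real mat \<Rightarrow> real mat \<Rightarrow> real mat \<Rightarrow> real mat" where
  "Psi n m A B2 B1 W =
     - (V2 n m * (Fmat n m A B2 * W + W * transpose_mat (Fmat n m A B2) + Qmat n m B1)
          * transpose_mat (V2 n m))"

text \<open>f, written on the matrix W (vec is a linear bijection R^{p x p} -> R^{p^2}):
  <vec R, vec W> + indicator(W psd) + sum of indicators(Psi_i W psd).\<close>
definition f_obj :: "nat \<Rightarrow> nat \<Rightarrow> nat \<Rightarrow> (nat \<Rightarrow> real mat) \<Rightarrow> (nat \<Rightarrow> real mat)
     \<Rightarrow> real mat \<Rightarrow> real mat \<Rightarrow> real mat \<Rightarrow> real mat \<Rightarrow> ereal" where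
  "f_obj n m M A B2 B1 C D W =
     ereal (\<Sum>i<n+m. \<Sum>j<n+m. Rmat n m C D $$ (i, j) * W $$ (i, j))
     + ind (psd_mat (n + m) W)
     + (\<Sum>i\<in>{1..M}. ind (psd_mat n (Psi n m (A i) (B2 i) B1 W)))"

definition g_obj :: "nat \<Rightarrow> nat \<Rightarrow> (nat \<Rightarrow> nat \<Rightarrow> real) \<Rightarrow> real mat \<Rightarrow> real" where
  "g_obj n m w P = (\<Sum>i<m. \<Sum>j<n. w i j * \<bar>P $$ (i, j)\<bar>)"

text \<open>The constraint  A-hat vec(W) = 0, i.e. W_ij = 0 for 1 <= i < j <= n (0-based here).\<close>
definition Ahat_zero :: "nat \<Rightarrow> real mat \<Rightarrow> bool" where
  "Ahat_zero n W \<longleftrightarrow> (\<forall>i j. i < j \<and> j < n \<longrightarrow> W $$ (i, j) = 0)"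

text \<open>(V_2 (x) V_1) vec W = vec(V_1 W V_2^T).\<close>
definition F_gamma :: "nat \<Rightarrow> nat \<Rightarrow> nat \<Rightarrow> (nat \<Rightarrow> real mat) \<Rightarrow> (nat \<Rightarrow> real mat)
     \<Rightarrow> real mat \<Rightarrow> real mat \<Rightarrow> real mat \<Rightarrow> (nat \<Rightarrow> nat \<Rightarrow> real) \<Rightarrow> real \<Rightarrow> real mat \<Rightarrow> ereal" where
  "F_gamma n m M A B2 B1 C D w \<gamma> W =
     f_obj n m M A B2 B1 C D W
     + ereal (\<gamma> * g_obj n m w (V1 n m * W * transpose_mat (V2 n m)))
     + ind (Ahat_zero n W)"

definition F_full :: "nat \<Rightarrow> nat \<Rightarrow> nat \<Rightarrow> (nat \<Rightarrow> real mat) \<Rightarrow> (nat \<Rightarrow> real mat)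
     \<Rightarrow> real mat \<Rightarrow> real mat \<Rightarrow> real mat \<Rightarrow> real mat \<Rightarrow> ereal" where
  "F_full n m M A B2 B1 C D W = f_obj n m M A B2 B1 C D W + ind (Ahat_zero n W)"

end

theory Submission
  imports Defs
begin

text \<open>Adding the penalty \<open>\<gamma> g \<ge> 0\<close> can only raise the objective, so
  \<open>inf F \<le> inf F\<^sup>\<gamma> \<le> F W + \<gamma> g(W)\<close> for every feasible \<open>W\<close>. Letting \<open>\<gamma> \<rightarrow> 0\<close> gives
  \<open>limsup inf F\<^sup>\<gamma> \<le> F W\<close>, hence \<open>limsup inf F\<^sup>\<gamma> \<le> inf F \<le> liminf inf F\<^sup>\<gamma>\<close>.\<close>

lemma tendsto_ereal_add_vanishing:
  fixes x :: ereal
  assumes "c \<longlonglongrightarrow> 0"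
  shows "(\<lambda>k. x + ereal (c k)) \<longlonglongrightarrow> x"
proof (cases x)
  case (real r)
  have "(\<lambda>k. r + c k) \<longlonglongrightarrow> r + 0"
    by (intro tendsto_intros assms)
  then show ?thesis
    using real by simp
qed simp_all

lemma INF_vanishing_penalty_tendsto:
  fixes F :: "'a \<Rightarrow> ereal" and G :: "'a \<Rightarrow> real" and \<gamma> :: "nat \<Rightarrow> real"
  assumes G_nonneg: "\<And>x. x \<in> S \<Longrightarrow> G x \<ge> 0"
    and \<gamma>_nonneg: "\<And>k. \<gamma> k \<ge> 0"
    and \<gamma>_lim: "\<gamma> \<longlonglongrightarrow> 0"
  shows "(\<lambda>k. INF x\<in>S. F x + ereal (\<gamma> k * G x)) \<longlonglongrightarrow> (INF x\<in>S. F x)"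
proof -
  define a where "a k = (INF x\<in>S. F x + ereal (\<gamma> k * G x))" for k
  define L where "L = (INF x\<in>S. F x)"
  have "L \<le> a k" for k
    unfolding a_def L_def
  proof (rule INF_mono)
    fix x assume "x \<in> S"
    then have "F x \<le> F x + ereal (\<gamma> k * G x)"
      using G_nonneg \<gamma>_nonneg by (simp add: add_increasing2)
    with \<open>x \<in> S\<close> show "\<exists>y\<in>S. F y \<le> F x + ereal (\<gamma> k * G x)" ..
  qed
  then have liminf: "L \<le> Liminf sequentially a"
    by (intro Liminf_bounded) simp
  have "Limsup sequentially a \<le> F x" if "x \<in> S" for x
  proof -
    have "Limsup sequentially a \<le> Limsup sequentially (\<lambda>k. F x + ereal (\<gamma> k * G x))"
      unfolding a_def using that by (intro Limsup_mono always_eventually allI INF_lower)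
    also have "\<dots> = F x"
      using \<gamma>_lim
      by (intro lim_imp_Limsup tendsto_ereal_add_vanishing tendsto_mult_left_zero) simp_all
    finally show ?thesis .
  qed
  then have limsup: "Limsup sequentially a \<le> L"
    unfolding L_def by (rule INF_greatest)
  have "a \<longlonglongrightarrow> L"
    using liminf limsup Liminf_le_Limsup[of sequentially a]
    by (intro Liminf_eq_Limsup) auto
  then show ?thesis
    unfolding a_def L_def .
qed

lemma g_obj_nonneg:
  assumes "\<And>i j. i < m \<Longrightarrow> j < n \<Longrightarrow> w i j \<ge> 0"
  shows "g_obj n m w P \<ge> 0"
  unfolding g_obj_def using assms by (intro sum_nonneg) simp

lemma F_gamma_eq_F_full_plus_penalty:
  "F_gamma n m M A B2 B1 C D w \<gamma> W =
     F_full n m M A B2 B1 C D W + ereal (\<gamma> * g_obj n m w (V1 n m * W * transpose_mat (V2 n m)))"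
  unfolding F_gamma_def F_full_def by (simp only: add.assoc add.commute[of "ereal _"])

theorem proposition16:
  fixes n m M l q :: nat
    and A B2 :: "nat \<Rightarrow> real mat"
    and B1 C D :: "real mat"
    and w :: "nat \<Rightarrow> nat \<Rightarrow> real"
    and \<gamma> :: "nat \<Rightarrow> real"
  assumes "n \<ge> 1" "m \<ge> 1" "M \<ge> 1"
    and "\<And>i. i \<in> {1..M} \<Longrightarrow> A i \<in> carrier_mat n n"
    and "\<And>i. i \<in> {1..M} \<Longrightarrow> B2 i \<in> carrier_mat n m"
    and "B1 \<in> carrier_mat n l"
    and "C \<in> carrier_mat q n"
    and "D \<in> carrier_mat q m"
    and "transpose_mat C * D = 0\<^sub>m n m"
    and "pd_mat m (transpose_mat D * D)"
    and "pd_mat n (B1 * transpose_mat B1)"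
    and "pd_mat n (transpose_mat C * C)"
    and "\<And>i j. i < m \<Longrightarrow> j < n \<Longrightarrow> w i j > 0"
    and "\<And>k. \<gamma> k > 0"
    and "\<gamma> \<longlonglongrightarrow> 0"
  shows "(\<lambda>k. INF W \<in> carrier_mat (m + n) (m + n). F_gamma n m M A B2 B1 C D w (\<gamma> k) W)
           \<longlonglongrightarrow> (INF W \<in> carrier_mat (m + n) (m + n). F_full n m M A B2 B1 C D W)"
proof -
  have "g_obj n m w P \<ge> 0" for P
    using assms(13) by (intro g_obj_nonneg) (simp add: less_imp_le)
  moreover have "\<gamma> k \<ge> 0" for k
    using assms(14) by (simp add: less_imp_le)
  ultimately show ?thesis
    unfolding F_gamma_eq_F_full_plus_penalty
    using assms(15) by (intro INF_vanishing_penalty_tendsto)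
qed

end
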